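(* Let $D$ be a ZX-diagram and $c$ a cycle in $D$. Let $t_1,\dots,t_n$ be tokens on $D$ and $s$ a token state with $t_1\cdots t_n\leadsto^* s$. Then for every non-null term $t$ of $s$, $P(c,t_1\cdots t_n)=P(c,t)$.
   Context: ZX-diagrams. A (pure) ZX-diagram is built from generators by sequential composition $D_2\circ D_1$ (the output edges of $D_1$ are joined to the equally many input edges of $D_2$, the latter being relabeled by the former) and parallel composition $D_1\otimes D_2$. The generators are: the identity (a single wire), the swap (two crossing wires), the cup (two input edges $e_0,e_1$, no output), the cap (no input, two output edges $e_0,e_1$), the green spider $Z^n_m(\alpha)$ with $\alpha\in\mathbb R$, input edges $e_1,\dots,e_n$ and output edges $e'_1,\dots,e'_m$, and the Hadamard gate $H$ with input edge $e_0$ and output edge $e_1$. Diagrams are read top to bottom; distinct edges have distinct labels; identity and swap introduce no node. $\mathcal E(D)$ is the set of edges. Each edge has a top and a bottom end; top-to-bottom is the direction $\downarrow$, the reverse is $\uparrow$. Tokens. A token is a triple $(e\,d\,x)\in\mathcal E(D)\times\{\downarrow,\uparrow\}\times\{0,1\}$; token states are elements of the commutative polynomial algebra $\mathbf{tkS}(D)=\mathbb C[\mathbf{tk}(D)]$ whose indeterminates are the tokens; terms are monomials with nonzero coefficient. Rules ($x,y,b\in\{0,1\}$, $\neg x=1-x$): Collision: $(e\downarrow x)(e\uparrow y)\leadsto_c\delta_{x,y}$. Diffusion: cup: $(e_b\downarrow x)\leadsto_d(e_{\neg b}\uparrow x)$; cap: $(e_b\uparrow x)\leadsto_d(e_{\neg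 b}\downarrow x)$; green spider: $(e_k\downarrow x)\leadsto_d e^{i\alpha x}\prod_{i\neq k}(e_i\uparrow x)\prod_j(e'_j\downarrow x)$, $(e'_k\uparrow x)\leadsto_d e^{i\alpha x}\prod_{j\neq k}(e'_j\downarrow x)\prod_i(e_i\uparrow x)$; Hadamard: $(e_0\downarrow x)\leadsto_d\frac{(-1)^x}{\sqrt2}(e_1\downarrow x)+\frac1{\sqrt2}(e_1\downarrow\neg x)$, $(e_1\uparrow x)\leadsto_d\frac{(-1)^x}{\sqrt2}(e_0\uparrow x)+\frac1{\sqrt2}(e_0\uparrow\neg x)$. A step $\leadsto_d$ (resp. $\leadsto_c$) chooses a term and a token (resp. colliding pair) occurring as a factor, replaces it by the right-hand side and expands. A token state is collision-free if no $\leadsto_c$ step applies. $s\leadsto u$ iff $s\leadsto_d s'\leadsto_c^*u$ with $u$ collision-free; $\leadsto^*$ is the reflexive-transitive closure. Paths, cycles, polarity. View $D$ as a multigraph whose vertices are the occurrences of cups, caps, green spiders and Hadamard gates (plus an endpoint for each dangling edge end) and whose edges are those of $D$. A path $(e_0,\dots,e_n)$ is a sequence of pairwise distinct edges with a traversal going from $e_i$ to $e_{i+1}$ through a common vertex $g_i$, the $g_i$ pairwise distinct; the orientation of $e_i$ is $\downarrow$ if traversed from top end to bottom end and $\uparrow$ otherwise. A cycle is such a path whose traversal, after its last edge, returns through a vertex to its first edge. For a token $t=(e\,d\,x)$ and a path or cycle $c$: $P(c,t)=1$ if $e\in c$ with orientation $d$, $-1$ if $e\in c$ with the opposite orientation,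 $0$ otherwise; $P(c,\alpha t_1\cdots t_m)=\sum_iP(c,t_i)$, $P(c,\alpha)=0$ for constants. *)

theory Defs
  imports Complex_Main "HOL-Library.Poly_Mapping"
begin

type_synonym edge = nat

text \<open>Node occurrences (generators other than identity and swap).
  NZ alpha es es': green spider with inputs es = [e_1..e_n], outputs es' = [e'_1..e'_m].\<close>
datatype node = NCup edge edge | NCap edge edge | NZ real "edge list" "edge list" | NH edge edge

fun node_ins :: "node \<Rightarrow> edge list" where
  "node_ins (NCup a b) = [a, b]"
| "node_ins (NCap a b) = []"
| "node_ins (NZ \<alpha> es es') = es"
| "node_ins (NH a b) = [a]"

fun node_outs :: "node \<Rightarrow> edge list" where
  "node_outs (NCup a b) = []"
| "node_outs (NCap a b) = [a, b]"
| "node_outs (NZ \<alpha> es es') = es'"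
| "node_outs (NH a b) = [b]"

fun map_node :: "(edge \<Rightarrow> edge) \<Rightarrow> node \<Rightarrow> node" where
  "map_node f (NCup a b) = NCup (f a) (f b)"
| "map_node f (NCap a b) = NCap (f a) (f b)"
| "map_node f (NZ \<alpha> es es') = NZ \<alpha> (map f es) (map f es')"
| "map_node f (NH a b) = NH (f a) (f b)"

record zxd =
  d_ins :: "edge list"
  d_outs :: "edge list"
  d_nodes :: "node list"

definition edges :: "zxd \<Rightarrow> edge set" where
  "edges D = set (d_ins D) \<union> set (d_outs D)
     \<union> (\<Union>g\<in>set (d_nodes D). set (node_ins g) \<union> set (node_outs g))"

text \<open>Sequential composition D2 o D1: the input edges of D2 are relabelled by the
  output edges of D1.\<close>
definition relabel :: "zxd \<Rightarrow> zxd \<Rightarrow> edge \<Rightarrow> edge" where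
  "relabel D1 D2 e = (case map_of (zip (d_ins D2) (d_outs D1)) e of Some e' \<Rightarrow> e' | None \<Rightarrow> e)"

definition seq_comp :: "zxd \<Rightarrow> zxd \<Rightarrow> zxd" where
  "seq_comp D2 D1 = \<lparr> d_ins = d_ins D1,
      d_outs = map (relabel D1 D2) (d_outs D2),
      d_nodes = d_nodes D1 @ map (map_node (relabel D1 D2)) (d_nodes D2) \<rparr>"

definition par_comp :: "zxd \<Rightarrow> zxd \<Rightarrow> zxd" where
  "par_comp D1 D2 = \<lparr> d_ins = d_ins D1 @ d_ins D2, d_outs = d_outs D1 @ d_outs D2,
      d_nodes = d_nodes D1 @ d_nodes D2 \<rparr>"

inductive zx_diagram :: "zxd \<Rightarrow> bool" where
  gen_id: "zx_diagram \<lparr> d_ins = [e], d_outs = [e], d_nodes = [] \<rparr>"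
| gen_swap: "a \<noteq> b \<Longrightarrow> zx_diagram \<lparr> d_ins = [a, b], d_outs = [b, a], d_nodes = [] \<rparr>"
| gen_cup: "a \<noteq> b \<Longrightarrow> zx_diagram \<lparr> d_ins = [a, b], d_outs = [], d_nodes = [NCup a b] \<rparr>"
| gen_cap: "a \<noteq> b \<Longrightarrow> zx_diagram \<lparr> d_ins = [], d_outs = [a, b], d_nodes = [NCap a b] \<rparr>"
| gen_Z: "distinct (es @ es') \<Longrightarrow>
     zx_diagram \<lparr> d_ins = es, d_outs = es', d_nodes = [NZ \<alpha> es es'] \<rparr>"
| gen_H: "a \<noteq> b \<Longrightarrow> zx_diagram \<lparr> d_ins = [a], d_outs = [b], d_nodes = [NH a b] \<rparr>"
| seq: "zx_diagram D1 \<Longrightarrow> zx_diagram D2 \<Longrightarrow> length (d_outs D1) = length (d_ins D2) \<Longrightarrow>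
     (edges D2 - set (d_ins D2)) \<inter> edges D1 = {} \<Longrightarrow> zx_diagram (seq_comp D2 D1)"
| par: "zx_diagram D1 \<Longrightarrow> zx_diagram D2 \<Longrightarrow> edges D1 \<inter> edges D2 = {} \<Longrightarrow>
     zx_diagram (par_comp D1 D2)"

datatype dir = Down | Up

text \<open>A token (e, d, x); the bit x \<in> {0,1} is represented by a boolean (True = 1).\<close>
type_synonym token = "edge \<times> dir \<times> bool"

text \<open>Token states: the commutative polynomial algebra C[tk(D)]; a polynomial is a
  finitely supported map from monomials (finitely supported token multiplicities)
  to coefficients.\<close>
type_synonym tstate = "(token \<Rightarrow>\<^sub>0 nat) \<Rightarrow>\<^sub>0 complex"

definition tk :: "token \<Rightarrow> tstate" where
  "tk t = Poly_Mapping.single (Poly_Mapping.single t 1) 1"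

definition cst :: "complex \<Rightarrow> tstate" where
  "cst c = Poly_Mapping.single 0 c"

definition tok_on :: "zxd \<Rightarrow> token \<Rightarrow> bool" where
  "tok_on D t \<longleftrightarrow> fst t \<in> edges D"

definition bitval :: "bool \<Rightarrow> real" where
  "bitval x = (if x then 1 else 0)"

definition phase :: "real \<Rightarrow> bool \<Rightarrow> complex" where
  "phase \<alpha> x = exp (\<i> * of_real (\<alpha> * bitval x))"

definition hsign :: "bool \<Rightarrow> complex" where
  "hsign x = (-1) ^ (if x then 1 else 0)"

inductive diff_rule :: "zxd \<Rightarrow> token \<Rightarrow> tstate \<Rightarrow> bool" where
  cup0: "NCup e0 e1 \<in> set (d_nodes D) \<Longrightarrow> diff_rule D (e0, Down, x) (tk (e1, Up, x))"
| cup1: "NCup e0 e1 \<in> set (d_nodes D) \<Longrightarrow> diff_rule D (e1, Down, x) (tk (e0, Up, x))"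
| cap0: "NCap e0 e1 \<in> set (d_nodes D) \<Longrightarrow> diff_rule D (e0, Up, x) (tk (e1, Down, x))"
| cap1: "NCap e0 e1 \<in> set (d_nodes D) \<Longrightarrow> diff_rule D (e1, Up, x) (tk (e0, Down, x))"
| zin: "NZ \<alpha> es es' \<in> set (d_nodes D) \<Longrightarrow> k < length es \<Longrightarrow>
     diff_rule D (es ! k, Down, x)
       (cst (phase \<alpha> x) * (\<Prod>i\<in>{i. i < length es \<and> i \<noteq> k}. tk (es ! i, Up, x))
          * (\<Prod>j<length es'. tk (es' ! j, Down, x)))"
| zout: "NZ \<alpha> es es' \<in> set (d_nodes D) \<Longrightarrow> k < length es' \<Longrightarrow>
     diff_rule D (es' ! k, Up, x)
       (cst (phase \<alpha> x) * (\<Prod>j\<in>{j. j < length es' \<and> j \<noteq> k}. tk (es' ! j, Down, x))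
          * (\<Prod>i<length es. tk (es ! i, Up, x)))"
| hin: "NH e0 e1 \<in> set (d_nodes D) \<Longrightarrow>
     diff_rule D (e0, Down, x)
       (cst (hsign x / sqrt 2) * tk (e1, Down, x) + cst (1 / sqrt 2) * tk (e1, Down, \<not> x))"
| hout: "NH e0 e1 \<in> set (d_nodes D) \<Longrightarrow>
     diff_rule D (e1, Up, x)
       (cst (hsign x / sqrt 2) * tk (e0, Up, x) + cst (1 / sqrt 2) * tk (e0, Up, \<not> x))"

definition d_step :: "zxd \<Rightarrow> tstate \<Rightarrow> tstate \<Rightarrow> bool" where
  "d_step D s s' \<longleftrightarrow> (\<exists>(m :: token \<Rightarrow>\<^sub>0 nat) (t :: token) (r :: tstate). m \<in> Poly_Mapping.keys s \<and> Poly_Mapping.lookup m t \<ge> 1 \<and> diff_rule D t r \<and>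
     s' = s - Poly_Mapping.single m (Poly_Mapping.lookup s m)
           + Poly_Mapping.single (m - Poly_Mapping.single t 1) (Poly_Mapping.lookup s m) * r)"

definition c_step :: "zxd \<Rightarrow> tstate \<Rightarrow> tstate \<Rightarrow> bool" where
  "c_step D s s' \<longleftrightarrow> (\<exists>(m :: token \<Rightarrow>\<^sub>0 nat) (e :: edge) (x :: bool) (y :: bool). m \<in> Poly_Mapping.keys s \<and> Poly_Mapping.lookup m (e, Down, x) \<ge> 1 \<and> Poly_Mapping.lookup m (e, Up, y) \<ge> 1 \<and>
     s' = s - Poly_Mapping.single m (Poly_Mapping.lookup s m)
       + Poly_Mapping.single (m - Poly_Mapping.single (e, Down, x) 1 - Poly_Mapping.single (e, Up, y) 1)
           (Poly_Mapping.lookup s m * (if x = y then 1 else 0)))"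

definition collision_free :: "zxd \<Rightarrow> tstate \<Rightarrow> bool" where
  "collision_free D s \<longleftrightarrow> \<not> (\<exists>s'. c_step D s s')"

definition tk_step :: "zxd \<Rightarrow> tstate \<Rightarrow> tstate \<Rightarrow> bool" where
  "tk_step D s u \<longleftrightarrow> (\<exists>s'. d_step D s s' \<and> (c_step D)\<^sup>*\<^sup>* s' u \<and> collision_free D u)"

text \<open>Vertices of the multigraph: node occurrences (by index) and one endpoint for
  each dangling edge end (True = top end, False = bottom end).\<close>
datatype vertex = VNode nat | VEnd edge bool

definition top_v :: "zxd \<Rightarrow> edge \<Rightarrow> vertex" where
  "top_v D e = (if \<exists>i < length (d_nodes D). e \<in> set (node_outs (d_nodes D ! i))
     then VNode (THE i. i < length (d_nodes D) \<and> e \<in> set (node_outs (d_nodes D ! i)))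
     else VEnd e True)"

definition bot_v :: "zxd \<Rightarrow> edge \<Rightarrow> vertex" where
  "bot_v D e = (if \<exists>i < length (d_nodes D). e \<in> set (node_ins (d_nodes D ! i))
     then VNode (THE i. i < length (d_nodes D) \<and> e \<in> set (node_ins (d_nodes D ! i)))
     else VEnd e False)"

definition head_v :: "zxd \<Rightarrow> edge \<times> dir \<Rightarrow> vertex" where
  "head_v D ed = (if snd ed = Down then bot_v D (fst ed) else top_v D (fst ed))"

definition tail_v :: "zxd \<Rightarrow> edge \<times> dir \<Rightarrow> vertex" where
  "tail_v D ed = (if snd ed = Down then top_v D (fst ed) else bot_v D (fst ed))"

definition is_cycle :: "zxd \<Rightarrow> (edge \<times> dir) list \<Rightarrow> bool" where
  "is_cycle D c \<longleftrightarrow> c \<noteq> [] \<and> distinct (map fst c) \<and> set (map fst c) \<subseteq> edges D \<and>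
     (\<forall>i < length c. head_v D (c ! i) = tail_v D (c ! (Suc i mod length c))) \<and>
     distinct (map (head_v D) c)"

definition opp :: "dir \<Rightarrow> dir" where
  "opp d = (if d = Down then Up else Down)"

definition pol_tok :: "(edge \<times> dir) list \<Rightarrow> token \<Rightarrow> int" where
  "pol_tok c t = (if (fst t, fst (snd t)) \<in> set c then 1
                  else if (fst t, opp (fst (snd t))) \<in> set c then -1 else 0)"

definition pol_mono :: "(edge \<times> dir) list \<Rightarrow> (token \<Rightarrow>\<^sub>0 nat) \<Rightarrow> int" where
  "pol_mono c m = (\<Sum>t\<in>Poly_Mapping.keys m. int (Poly_Mapping.lookup m t) * pol_tok c t)"

end

theory Submission
  imports Defs
begin

text \<open>The polarity of a monomial is additive in its tokens; we show that every term of every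
  reachable state has the polarity of the initial monomial. A collision removes a pair
  \<open>(e\<down>x)(e\<up>y)\<close> of opposite polarities. A diffusion at a node replaces a token travelling
  into the node by tokens travelling out of it along all the other incident edges. A cycle
  leaves every vertex exactly as often as it enters it, so the polarities of all arcs leaving a
  node sum to zero; hence the new tokens together have the polarity of the one they replace.
  Distinct edge labels, preserved by both compositions, are what make the vertices of the
  diagram well defined.\<close>

lemma sum_list_rotate1:
  "(\<Sum>x\<leftarrow>rotate1 xs. f x) = (\<Sum>x\<leftarrow>xs. (f x :: 'a :: comm_monoid_add))"
  by (cases xs) (simp_all add: add.commute)

lemma index_unique_in_concat:
  assumes "distinct (concat (map f xs))" "i < length xs" "j < length xs"
    "e \<in> set (f (xs ! i))" "e \<in> set (f (xs ! j))"
  shows "i = j"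
  using assms
proof (induction xs arbitrary: i j)
  case (Cons a xs)
  show ?case
  proof (cases i; cases j)
    fix i' j' assume "i = Suc i'" "j = Suc j'"
    then show ?thesis using Cons by simp
  qed (use Cons.prems in \<open>auto dest!: nth_mem\<close>)
qed simp

definition top_ends :: "zxd \<Rightarrow> edge list" where
  "top_ends D = d_ins D @ concat (map node_outs (d_nodes D))"

definition bottom_ends :: "zxd \<Rightarrow> edge list" where
  "bottom_ends D = d_outs D @ concat (map node_ins (d_nodes D))"

text \<open>No label occurs at two top ends or at two bottom ends, so that the
  descriptions in \<open>top_v\<close> and \<open>bot_v\<close> select a unique node.\<close>

definition well_labelled :: "zxd \<Rightarrow> bool" where
  "well_labelled D \<longleftrightarrow> distinct (top_ends D) \<and> distinct (bottom_ends D)"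

lemma set_top_ends_subset: "set (top_ends D) \<subseteq> edges D"
  by (auto simp: top_ends_def edges_def)

lemma set_bottom_ends_subset: "set (bottom_ends D) \<subseteq> edges D"
  by (auto simp: bottom_ends_def edges_def)

lemma node_outs_map_node [simp]: "node_outs (map_node f N) = map f (node_outs N)"
  by (cases N) auto

lemma node_ins_map_node [simp]: "node_ins (map_node f N) = map f (node_ins N)"
  by (cases N) auto

lemma relabel_notin: "e \<notin> set (d_ins D2) \<Longrightarrow> relabel D1 D2 e = e"
  by (auto simp: relabel_def dest: map_of_SomeD set_zip_leftD split: option.split)

lemma relabel_nth:
  assumes "distinct (d_ins D2)" "length (d_outs D1) = length (d_ins D2)" "k < length (d_ins D2)"
  shows "relabel D1 D2 (d_ins D2 ! k) = d_outs D1 ! k"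
  using assms map_of_zip_nth[of "d_ins D2" "d_outs D1" k] by (simp add: relabel_def)

lemma relabel_in_d_outs:
  assumes "distinct (d_ins D2)" "length (d_outs D1) = length (d_ins D2)" "e \<in> set (d_ins D2)"
  shows "relabel D1 D2 e \<in> set (d_outs D1)"
  using assms relabel_nth[OF assms(1,2)] by (auto simp: in_set_conv_nth)

lemma inj_on_relabel:
  assumes "distinct (d_ins D2)" "distinct (d_outs D1)" "length (d_outs D1) = length (d_ins D2)"
    and "(edges D2 - set (d_ins D2)) \<inter> edges D1 = {}"
  shows "inj_on (relabel D1 D2) (edges D2)"
proof (rule inj_onI)
  fix a b assume ab: "a \<in> edges D2" "b \<in> edges D2" "relabel D1 D2 a = relabel D1 D2 b"
  have side: "relabel D1 D2 e \<in> edges D1 \<longleftrightarrow> e \<in> set (d_ins D2)" if "e \<in> edges D2" for e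
    using that assms(4) relabel_in_d_outs[OF assms(1,3), of e] relabel_notin[of e D2 D1]
    by (cases "e \<in> set (d_ins D2)") (auto simp: edges_def)
  show "a = b"
  proof (cases "a \<in> set (d_ins D2)")
    case True
    then have "b \<in> set (d_ins D2)"
      using side ab by metis
    then show ?thesis
      using True ab(3) assms(1-3) relabel_nth[OF assms(1,3)]
      by (auto simp: in_set_conv_nth nth_eq_iff_index_eq)
  next
    case False
    then have "b \<notin> set (d_ins D2)"
      using side ab by metis
    then show ?thesis
      using False ab(3) by (simp add: relabel_notin)
  qed
qed

lemma relabel_mem_cases:
  assumes "distinct (d_ins D2)" "length (d_outs D1) = length (d_ins D2)" "e \<in> edges D2"
  shows "relabel D1 D2 e \<in> set (d_outs D1) \<union> (edges D2 - set (d_ins D2))"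
  using assms relabel_in_d_outs[OF assms(1,2)] relabel_notin[of e D2 D1]
  by (cases "e \<in> set (d_ins D2)") auto

lemma well_labelled_seq_comp:
  assumes wl: "well_labelled D1" "well_labelled D2"
    and len: "length (d_outs D1) = length (d_ins D2)"
    and disj: "(edges D2 - set (d_ins D2)) \<inter> edges D1 = {}"
  shows "well_labelled (seq_comp D2 D1)"
proof -
  let ?\<rho> = "relabel D1 D2"
  define X where "X = concat (map node_outs (d_nodes D2))"
  define Y where "Y = concat (map node_ins (d_nodes D2))"
  define B where "B = concat (map node_ins (d_nodes D1))"
  have top2: "top_ends D2 = d_ins D2 @ X" and bot2: "bottom_ends D2 = d_outs D2 @ Y"
    and bot1: "bottom_ends D1 = d_outs D1 @ B"
    by (simp_all add: top_ends_def bottom_ends_def X_def Y_def B_def)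
  have ins2: "distinct (d_ins D2)" and outs1: "distinct (d_outs D1)"
    using wl top2 bot1 by (simp_all add: well_labelled_def)
  have inj: "inj_on ?\<rho> (edges D2)"
    using inj_on_relabel[OF ins2 outs1 len disj] .
  have "map ?\<rho> X = X"
    using wl(2) top2 by (intro map_idI relabel_notin) (auto simp: well_labelled_def)
  then have "top_ends (seq_comp D2 D1) = top_ends D1 @ X"
    by (simp add: top_ends_def seq_comp_def X_def map_concat comp_def)
  moreover have "distinct (top_ends D1 @ X)"
    using wl top2 set_top_ends_subset[of D1] set_top_ends_subset[of D2] disj
    by (auto simp: well_labelled_def)
  moreover have "bottom_ends (seq_comp D2 D1) = map ?\<rho> (d_outs D2) @ B @ map ?\<rho> Y"
    by (simp add: bottom_ends_def seq_comp_def Y_def B_def map_concat comp_def)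
  moreover have "distinct (B @ map ?\<rho> (d_outs D2 @ Y))"
  proof -
    have "distinct (map ?\<rho> (d_outs D2 @ Y))"
      using wl(2) bot2 set_bottom_ends_subset[of D2] inj
      by (simp only: well_labelled_def distinct_map) (metis inj_on_subset)
    moreover have "set (d_outs D2 @ Y) \<subseteq> edges D2"
      using bot2 set_bottom_ends_subset[of D2] by simp
    then have "set (map ?\<rho> (d_outs D2 @ Y)) \<subseteq> set (d_outs D1) \<union> (edges D2 - set (d_ins D2))"
      using relabel_mem_cases[OF ins2 len] by auto
    moreover have "set B \<subseteq> edges D1" "distinct B" "set B \<inter> set (d_outs D1) = {}"
      using wl(1) bot1 set_bottom_ends_subset[of D1] by (auto simp: well_labelled_def)
    ultimately show ?thesis
      using disj by (simp only: distinct_append) blast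
  qed
  ultimately show ?thesis
    by (auto simp: well_labelled_def)
qed

lemma well_labelled_par_comp:
  assumes "well_labelled D1" "well_labelled D2" "edges D1 \<inter> edges D2 = {}"
  shows "well_labelled (par_comp D1 D2)"
proof -
  have "distinct (top_ends D1 @ top_ends D2)" "distinct (bottom_ends D1 @ bottom_ends D2)"
    using assms set_top_ends_subset[of D1] set_top_ends_subset[of D2]
      set_bottom_ends_subset[of D1] set_bottom_ends_subset[of D2]
    by (auto simp: well_labelled_def)
  then show ?thesis
    by (auto simp: well_labelled_def top_ends_def bottom_ends_def par_comp_def)
qed

lemma zx_diagram_well_labelled: "zx_diagram D \<Longrightarrow> well_labelled D"
proof (induction rule: zx_diagram.induct)
  case (seq D1 D2)
  then show ?case by (simp add: well_labelled_seq_comp)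
next
  case (par D1 D2)
  then show ?case by (simp add: well_labelled_par_comp)
qed (auto simp: well_labelled_def top_ends_def bottom_ends_def)

lemma vertex_choice_eq_VNode_iff:
  assumes "distinct (concat (map f xs))" "i < length xs"
  shows "(if \<exists>j < length xs. e \<in> set (f (xs ! j))
          then VNode (THE j. j < length xs \<and> e \<in> set (f (xs ! j))) else VEnd e b) = VNode i
    \<longleftrightarrow> e \<in> set (f (xs ! i))"
proof -
  have unique: "(THE j. j < length xs \<and> e \<in> set (f (xs ! j))) = k"
    if "k < length xs" "e \<in> set (f (xs ! k))" for k
    using that index_unique_in_concat[OF assms(1)] by blast
  show ?thesis
    using assms(2) unique index_unique_in_concat[OF assms(1)] by auto
qed

lemma bot_v_eq_VNode_iff:
  "well_labelled D \<Longrightarrow> i < length (d_nodes D) \<Longrightarrow>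
    bot_v D e = VNode i \<longleftrightarrow> e \<in> set (node_ins (d_nodes D ! i))"
  unfolding bot_v_def
  by (rule vertex_choice_eq_VNode_iff) (simp_all add: well_labelled_def bottom_ends_def)

lemma top_v_eq_VNode_iff:
  "well_labelled D \<Longrightarrow> i < length (d_nodes D) \<Longrightarrow>
    top_v D e = VNode i \<longleftrightarrow> e \<in> set (node_outs (d_nodes D ! i))"
  unfolding top_v_def
  by (rule vertex_choice_eq_VNode_iff) (simp_all add: well_labelled_def top_ends_def)

definition out_arcs :: "node \<Rightarrow> (edge \<times> dir) list" where
  "out_arcs N = map (\<lambda>e. (e, Up)) (node_ins N) @ map (\<lambda>e. (e, Down)) (node_outs N)"

lemma tail_v_eq_VNode_iff:
  assumes "well_labelled D" "i < length (d_nodes D)"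
  shows "tail_v D p = VNode i \<longleftrightarrow> p \<in> set (out_arcs (d_nodes D ! i))"
  using bot_v_eq_VNode_iff[OF assms] top_v_eq_VNode_iff[OF assms]
  by (cases p; cases "snd p") (auto simp: tail_v_def out_arcs_def)

definition reverse_arc :: "edge \<times> dir \<Rightarrow> edge \<times> dir" where
  "reverse_arc p = (fst p, opp (snd p))"

lemma reverse_arc_reverse_arc [simp]: "reverse_arc (reverse_arc p) = p"
  by (cases p; cases "snd p") (simp_all add: reverse_arc_def opp_def)

lemma reverse_arc_eq_iff: "reverse_arc p = q \<longleftrightarrow> p = reverse_arc q"
  by auto

lemma head_v_eq_VNode_iff:
  assumes "well_labelled D" "i < length (d_nodes D)"
  shows "head_v D p = VNode i \<longleftrightarrow> reverse_arc p \<in> set (out_arcs (d_nodes D ! i))"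
  using bot_v_eq_VNode_iff[OF assms] top_v_eq_VNode_iff[OF assms]
  by (cases p; cases "snd p") (auto simp: head_v_def out_arcs_def reverse_arc_def opp_def)

lemma distinct_out_arcs:
  assumes "well_labelled D" "N \<in> set (d_nodes D)"
  shows "distinct (out_arcs N)"
proof -
  have "distinct (node_ins N)" "distinct (node_outs N)"
    using assms by (auto simp: well_labelled_def top_ends_def bottom_ends_def distinct_concat_iff)
  then show ?thesis
    by (auto simp: out_arcs_def distinct_map inj_on_def)
qed

lemma cycle_heads_eq_rotate1_tails:
  "is_cycle D c \<Longrightarrow> map (head_v D) c = map (tail_v D) (rotate1 c)"
  by (auto simp: is_cycle_def nth_rotate1 intro: nth_equalityI)

lemma pol_tok_eq_sum:
  assumes "distinct (map fst c)"
  shows "pol_tok c (e, d, x) = (\<Sum>p\<in>set c. of_bool (p = (e, d)) - of_bool (p = reverse_arc (e, d)))"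
proof -
  have "\<not> ((e, d) \<in> set c \<and> (e, opp d) \<in> set c)"
    using eq_key_imp_eq_value[OF assms] by (cases d) (fastforce simp: opp_def)+
  then show ?thesis
    by (simp add: sum_subtractf pol_tok_def reverse_arc_def)
qed

lemma pol_tok_Down_Up:
  assumes "distinct (map fst c)"
  shows "pol_tok c (e, Down, x) = - pol_tok c (e, Up, y)"
  using assms by (auto simp: pol_tok_def opp_def dest: eq_key_imp_eq_value)

lemma pol_tok_bit_irrelevant: "pol_tok c (e, d, x) = pol_tok c (e, d, y)"
  by (simp add: pol_tok_def)

lemma node_pol_balance:
  assumes wl: "well_labelled D" and cy: "is_cycle D c" and N: "N \<in> set (d_nodes D)"
  shows "(\<Sum>q\<leftarrow>out_arcs N. pol_tok c (fst q, snd q, x)) = 0"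
proof -
  obtain i where i: "i < length (d_nodes D)" and Ni: "d_nodes D ! i = N"
    using N by (auto simp: in_set_conv_nth)
  let ?A = "set (out_arcs N)" and ?v = "VNode i"
  txt \<open>Each arc of the cycle contributes \<open>+1\<close> at its tail and \<open>-1\<close> at its head,
    and the heads of the cycle are its tails rotated by one.\<close>
  have dfst: "distinct (map fst c)" and dc: "distinct c"
    using cy by (auto simp: is_cycle_def distinct_map)
  have "(\<Sum>q\<leftarrow>out_arcs N. pol_tok c (fst q, snd q, x))
      = (\<Sum>q\<in>?A. \<Sum>p\<in>set c. of_bool (p = q) - of_bool (p = reverse_arc q))"
    using distinct_out_arcs[OF wl N] pol_tok_eq_sum[OF dfst]
    by (simp add: sum_list_distinct_conv_sum_set)
  also have "\<dots> = (\<Sum>p\<in>set c. \<Sum>q\<in>?A. of_bool (p = q) - of_bool (reverse_arc p = q))"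
    by (subst sum.swap) (simp only: reverse_arc_eq_iff)
  also have "\<dots> = (\<Sum>p\<in>set c. of_bool (p \<in> ?A) - of_bool (reverse_arc p \<in> ?A))"
    by (intro sum.cong refl) (simp add: sum_subtractf of_bool_def)
  also have "\<dots> = (\<Sum>p\<leftarrow>c. of_bool (tail_v D p = ?v) - of_bool (head_v D p = ?v))"
    by (simp only: sum_list_distinct_conv_sum_set[OF dc] tail_v_eq_VNode_iff[OF wl i]
        head_v_eq_VNode_iff[OF wl i] Ni)
  also have "\<dots> = (\<Sum>p\<leftarrow>c. of_bool (tail_v D p = ?v))
      - (\<Sum>p\<leftarrow>rotate1 c. of_bool (tail_v D p = ?v))"
    using arg_cong[OF cycle_heads_eq_rotate1_tails[OF cy],
        of "\<lambda>vs. \<Sum>w\<leftarrow>vs. of_bool (w = ?v)"]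
    by (simp add: sum_list_subtractf comp_def)
  also have "\<dots> = 0"
    by (simp add: sum_list_rotate1)
  finally show ?thesis .
qed

lemma pol_mono_add: "pol_mono c (a + b) = pol_mono c a + pol_mono c b"
proof -
  let ?K = "Poly_Mapping.keys a \<union> Poly_Mapping.keys b"
  have extend: "pol_mono c m = (\<Sum>t\<in>?K. int (Poly_Mapping.lookup m t) * pol_tok c t)"
    if "Poly_Mapping.keys m \<subseteq> ?K" for m
    unfolding pol_mono_def using that
    by (intro sum.mono_neutral_left) (auto simp: in_keys_iff)
  show ?thesis
    using keys_add[of a b]
    by (simp add: extend lookup_add sum.distrib algebra_simps)
qed

lemma pol_mono_zero [simp]: "pol_mono c 0 = 0"
  by (simp add: pol_mono_def)

lemma pol_mono_single [simp]: "pol_mono c (Poly_Mapping.single t k) = int k * pol_tok c t"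
  by (simp add: pol_mono_def)

lemma pol_mono_sum: "pol_mono c (\<Sum>a\<in>A. f a) = (\<Sum>a\<in>A. pol_mono c (f a))"
  by (induction A rule: infinite_finite_induct) (simp_all add: pol_mono_add)

lemma pol_mono_sum_list: "pol_mono c (\<Sum>x\<leftarrow>xs. f x) = (\<Sum>x\<leftarrow>xs. pol_mono c (f x))"
  by (induction xs) (simp_all add: pol_mono_add)

lemma pol_mono_minus_single:
  assumes "Poly_Mapping.lookup m t \<ge> 1"
  shows "pol_mono c (m - Poly_Mapping.single t 1) = pol_mono c m - pol_tok c t"
proof -
  have "m = (m - Poly_Mapping.single t 1) + Poly_Mapping.single t 1"
    using assms
    by (intro poly_mapping_eqI) (auto simp: lookup_add lookup_minus lookup_single when_def)
  then have "pol_mono c m = pol_mono c (m - Poly_Mapping.single t 1) + pol_tok c t"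
    by (metis pol_mono_add pol_mono_single of_nat_1 mult_1)
  then show ?thesis by simp
qed

lemma tk_mult_single:
  "tk u * Poly_Mapping.single k 1 = Poly_Mapping.single (Poly_Mapping.single u 1 + k) (1 :: complex)"
  by (simp add: tk_def mult_single)

lemma prod_tk:
  "finite A \<Longrightarrow> (\<Prod>a\<in>A. tk (f a)) = Poly_Mapping.single (\<Sum>a\<in>A. Poly_Mapping.single (f a) 1) 1"
  by (induction A rule: finite_induct) (simp_all add: tk_mult_single)

lemma prod_list_tk:
  "(\<Prod>t\<leftarrow>ts. tk t) = Poly_Mapping.single (\<Sum>t\<leftarrow>ts. Poly_Mapping.single t 1) 1"
  by (induction ts) (simp_all add: tk_mult_single)

lemma keys_tk: "Poly_Mapping.keys (tk u) = {Poly_Mapping.single u 1}"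
  by (simp add: tk_def)

lemma keys_cst_tk_plus_cst_tk:
  "Poly_Mapping.keys (cst a * tk u + cst b * tk w) \<subseteq> {Poly_Mapping.single u 1, Poly_Mapping.single w 1}"
  using keys_add[of "cst a * tk u" "cst b * tk w"]
  by (auto simp: cst_def tk_def mult_single split: if_splits)

definition has_polarity :: "(edge \<times> dir) list \<Rightarrow> int \<Rightarrow> tstate \<Rightarrow> bool" where
  "has_polarity c P s \<longleftrightarrow> (\<forall>m \<in> Poly_Mapping.keys s. pol_mono c m = P)"

lemma has_polarity_tk: "has_polarity c (pol_tok c t) (tk t)"
  by (simp add: has_polarity_def keys_tk)

lemma has_polarity_prod_list_tk: "has_polarity c (\<Sum>t\<leftarrow>ts. pol_tok c t) (\<Prod>t\<leftarrow>ts. tk t)"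
  by (simp add: has_polarity_def prod_list_tk pol_mono_sum_list)

lemma has_polarity_hadamard_term:
  "has_polarity c (pol_tok c (e, d, x)) (cst a * tk (e, d, x) + cst b * tk (e, d, \<not> x))"
  using keys_cst_tk_plus_cst_tk[of a "(e, d, x)" b "(e, d, \<not> x)"]
    pol_tok_bit_irrelevant[of c e d "\<not> x" x]
  by (auto simp: has_polarity_def)

lemma has_polarity_spider_term:
  assumes k: "k < length as"
    and bal: "(\<Sum>e\<leftarrow>as. pol_tok c (e, d, x)) + (\<Sum>e\<leftarrow>bs. pol_tok c (e, d', x)) = 0"
  shows "has_polarity c (- pol_tok c (as ! k, d, x))
    (cst a * (\<Prod>i\<in>{i. i < length as \<and> i \<noteq> k}. tk (as ! i, d, x))
       * (\<Prod>j<length bs. tk (bs ! j, d', x)))"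
proof -
  have "{i. i < length as \<and> i \<noteq> k} = {..<length as} - {k}" by auto
  then have "(\<Sum>i<length as. pol_tok c (as ! i, d, x))
      = pol_tok c (as ! k, d, x) + (\<Sum>i\<in>{i. i < length as \<and> i \<noteq> k}. pol_tok c (as ! i, d, x))"
    using k by (simp add: sum.remove)
  then have "pol_mono c ((\<Sum>i\<in>{i. i < length as \<and> i \<noteq> k}. Poly_Mapping.single (as ! i, d, x) 1)
      + (\<Sum>j<length bs. Poly_Mapping.single (bs ! j, d', x) 1)) = - pol_tok c (as ! k, d, x)"
    using bal by (simp add: pol_mono_add pol_mono_sum sum_list_sum_nth atLeast0LessThan)
  then show ?thesis
    by (simp add: has_polarity_def prod_tk cst_def mult_single)
qed

lemma diff_rule_has_polarity:
  assumes wl: "well_labelled D" and cy: "is_cycle D c" and r: "diff_rule D t r"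
  shows "has_polarity c (pol_tok c t) r"
proof -
  have dfst: "distinct (map fst c)"
    using cy by (simp add: is_cycle_def)
  note bal = node_pol_balance[OF wl cy]
  note Down_Up = pol_tok_Down_Up[OF dfst]
  from r show ?thesis
  proof cases
    case (cup0 e0 e1 x)
    have "pol_tok c (e0, Down, x) = pol_tok c (e1, Up, x)"
      using bal[OF cup0(3), of x] Down_Up[of e0 x x] by (simp add: out_arcs_def)
    then show ?thesis using cup0 has_polarity_tk by simp
  next
    case (cup1 e0 e1 x)
    have "pol_tok c (e1, Down, x) = pol_tok c (e0, Up, x)"
      using bal[OF cup1(3), of x] Down_Up[of e1 x x] by (simp add: out_arcs_def)
    then show ?thesis using cup1 has_polarity_tk by simp
  next
    case (cap0 e0 e1 x)
    have "pol_tok c (e0, Up, x) = pol_tok c (e1, Down, x)"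
      using bal[OF cap0(3), of x] Down_Up[of e0 x x] by (simp add: out_arcs_def)
    then show ?thesis using cap0 has_polarity_tk by simp
  next
    case (cap1 e0 e1 x)
    have "pol_tok c (e1, Up, x) = pol_tok c (e0, Down, x)"
      using bal[OF cap1(3), of x] Down_Up[of e1 x x] by (simp add: out_arcs_def)
    then show ?thesis using cap1 has_polarity_tk by simp
  next
    case (hin e0 e1 x)
    have "pol_tok c (e0, Down, x) = pol_tok c (e1, Down, x)"
      using bal[OF hin(3), of x] Down_Up[of e0 x x] by (simp add: out_arcs_def)
    then show ?thesis using hin has_polarity_hadamard_term by simp
  next
    case (hout e0 e1 x)
    have "pol_tok c (e1, Up, x) = pol_tok c (e0, Up, x)"
      using bal[OF hout(3), of x] Down_Up[of e1 x x] by (simp add: out_arcs_def)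
    then show ?thesis using hout has_polarity_hadamard_term by simp
  next
    case (zin \<alpha> es es' k x)
    have "(\<Sum>e\<leftarrow>es. pol_tok c (e, Up, x)) + (\<Sum>e\<leftarrow>es'. pol_tok c (e, Down, x)) = 0"
      using bal[OF zin(3), of x] by (simp add: out_arcs_def comp_def)
    from has_polarity_spider_term[OF zin(4) this] show ?thesis
      using zin Down_Up[of "es ! k" x x] by simp
  next
    case (zout \<alpha> es es' k x)
    have "(\<Sum>e\<leftarrow>es'. pol_tok c (e, Down, x)) + (\<Sum>e\<leftarrow>es. pol_tok c (e, Up, x)) = 0"
      using bal[OF zout(3), of x] by (simp add: out_arcs_def comp_def add.commute)
    from has_polarity_spider_term[OF zout(4) this] show ?thesis
      using zout Down_Up[of "es' ! k" x x] by simp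
  qed
qed


lemma has_polarity_replace_term:
  assumes "has_polarity c P s" "m \<in> Poly_Mapping.keys s" "has_polarity c P u"
  shows "has_polarity c P (s - Poly_Mapping.single m a + u)"
proof -
  have "Poly_Mapping.keys (s - Poly_Mapping.single m a + u)
      \<subseteq> Poly_Mapping.keys s \<union> {m} \<union> Poly_Mapping.keys u"
    using keys_add[of "s - Poly_Mapping.single m a" u] keys_diff[of s "Poly_Mapping.single m a"]
    by (auto split: if_splits)
  then show ?thesis
    using assms by (auto simp: has_polarity_def)
qed

lemma has_polarity_single: "pol_mono c k = P \<Longrightarrow> has_polarity c P (Poly_Mapping.single k a)"
  by (simp add: has_polarity_def)

lemma has_polarity_single_mult:
  "has_polarity c Q r \<Longrightarrow> has_polarity c (pol_mono c k + Q) (Poly_Mapping.single k a * r)"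
  using keys_mult[of "Poly_Mapping.single k a" r]
  by (fastforce simp: has_polarity_def pol_mono_add split: if_splits)

lemma d_step_has_polarity:
  assumes wl: "well_labelled D" and cy: "is_cycle D c"
    and s: "has_polarity c P s" and step: "d_step D s s'"
  shows "has_polarity c P s'"
proof -
  obtain m t r where m: "m \<in> Poly_Mapping.keys s" and t: "Poly_Mapping.lookup m t \<ge> 1"
    and r: "diff_rule D t r"
    and s': "s' = s - Poly_Mapping.single m (Poly_Mapping.lookup s m)
      + Poly_Mapping.single (m - Poly_Mapping.single t 1) (Poly_Mapping.lookup s m) * r"
    using step unfolding d_step_def by blast
  have "pol_mono c (m - Poly_Mapping.single t 1) + pol_tok c t = P"
    using s m pol_mono_minus_single[OF t] by (simp add: has_polarity_def)
  then show ?thesis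
    unfolding s' using has_polarity_single_mult[OF diff_rule_has_polarity[OF wl cy r]]
    by (metis has_polarity_replace_term[OF s m])
qed

lemma c_step_has_polarity:
  assumes cy: "is_cycle D c" and s: "has_polarity c P s" and step: "c_step D s s'"
  shows "has_polarity c P s'"
proof -
  obtain m e x y where m: "m \<in> Poly_Mapping.keys s"
    and down: "Poly_Mapping.lookup m (e, Down, x) \<ge> 1"
    and up: "Poly_Mapping.lookup m (e, Up, y) \<ge> 1"
    and s': "s' = s - Poly_Mapping.single m (Poly_Mapping.lookup s m)
      + Poly_Mapping.single (m - Poly_Mapping.single (e, Down, x) 1 - Poly_Mapping.single (e, Up, y) 1)
          (Poly_Mapping.lookup s m * (if x = y then 1 else 0))"
    using step unfolding c_step_def by blast
  have up': "Poly_Mapping.lookup (m - Poly_Mapping.single (e, Down, x) 1) (e, Up, y) \<ge> 1"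
    using up by (simp add: lookup_minus lookup_single)
  have "pol_mono c (m - Poly_Mapping.single (e, Down, x) 1 - Poly_Mapping.single (e, Up, y) 1)
      = pol_mono c m - (pol_tok c (e, Down, x) + pol_tok c (e, Up, y))"
    by (simp only: pol_mono_minus_single[OF up'] pol_mono_minus_single[OF down])
  also have "\<dots> = P"
    using s m pol_tok_Down_Up[of c e x y] cy by (simp add: has_polarity_def is_cycle_def)
  finally show ?thesis
    unfolding s' by (intro has_polarity_replace_term[OF s m] has_polarity_single)
qed

lemma tk_step_has_polarity:
  assumes wl: "well_labelled D" and cy: "is_cycle D c"
    and s: "has_polarity c P s" and step: "tk_step D s u"
  shows "has_polarity c P u"
proof -
  obtain s' where d: "d_step D s s'" and cs: "(c_step D)\<^sup>*\<^sup>* s' u"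
    using step unfolding tk_step_def by blast
  from cs d_step_has_polarity[OF wl cy s d] show ?thesis
    by (induction rule: rtranclp_induct) (auto intro: c_step_has_polarity[OF cy])
qed

theorem mainTheorem3:
  fixes D :: zxd and c :: "(edge \<times> dir) list" and ts :: "token list" and s :: tstate
    and m :: "token \<Rightarrow>\<^sub>0 nat"
  assumes "zx_diagram D"
    and "is_cycle D c"
    and "\<forall>t \<in> set ts. tok_on D t"
    and "(tk_step D)\<^sup>*\<^sup>* (\<Prod>t\<leftarrow>ts. tk t) s"
    and "m \<in> Poly_Mapping.keys s"
  shows "(\<Sum>t\<leftarrow>ts. pol_tok c t) = pol_mono c m"
proof -
  have wl: "well_labelled D"
    using assms(1) by (rule zx_diagram_well_labelled)
  from assms(4) has_polarity_prod_list_tk have "has_polarity c (\<Sum>t\<leftarrow>ts. pol_tok c t) s"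
    by (induction rule: rtranclp_induct) (auto intro: tk_step_has_polarity[OF wl assms(2)])
  then show ?thesis
    using assms(5) by (simp add: has_polarity_def)
qed

end
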